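(* Let $\Lambda$ be a unital commutative ring, $q$ a non-negative integer, $\mathfrak g$ a Lie algebra over $\Lambda$ and $\mathfrak h$ an ideal of $\mathfrak g$. (i) There is a Lie algebra homomorphism $\xi^{\otimes}\colon\mathfrak h\otimes^q\mathfrak g\to\mathfrak g$ with $\xi^{\otimes}(h\otimes g)=[h,g]$ and (when $q\ge1$) $\xi^{\otimes}(\{h\})=qh$ for $h\in\mathfrak h$, $g\in\mathfrak g$; moreover $\xi^{\otimes}$ factors through the canonical projection $\mathfrak h\otimes^q\mathfrak g\to\mathfrak h\wedge^q\mathfrak g$, inducing a Lie homomorphism $\xi^{\wedge}\colon\mathfrak h\wedge^q\mathfrak g\to\mathfrak g$. (ii) For $q\ge1$: the images of $\xi^{\otimes}$ and $\xi^{\wedge}$ lie in $\mathfrak h$, and for every $x\in\mathfrak h\otimes^q\mathfrak g$ one has $\{\xi^{\otimes}(x)\}=qx$, and for every $x\in\mathfrak h\wedge^q\mathfrak g$ one has $\{\xi^{\wedge}(x)\}=qx$.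
   Context: All Lie algebras are over $\Lambda$. For $q\ge1$, the non-abelian $q$-tensor product $\mathfrak h\otimes^q\mathfrak g$ is the Lie algebra generated by symbols $h\otimes g$ and $\{h\}$ ($h\in\mathfrak h$, $g\in\mathfrak g$) subject to, for all $h,h'\in\mathfrak h$, $g,g'\in\mathfrak g$, $\lambda,\lambda'\in\Lambda$: (1) $\lambda(h\otimes g)=\lambda h\otimes g=h\otimes\lambda g$; (2) $(h+h')\otimes g=h\otimes g+h'\otimes g$; (3) $h\otimes(g+g')=h\otimes g+h\otimes g'$; (4) $[h,h']\otimes g=h\otimes[h',g]-h'\otimes[h,g]$; (5) $h\otimes[g,g']=[g',h]\otimes g-[g,h]\otimes g'$; (6) $[h\otimes g,h'\otimes g']=[h,g]\otimes[h',g']$; (7) $[\{h'\},h\otimes g]=[qh',h]\otimes g+h\otimes[qh',g]$; (8) $\{\lambda h+\lambda'h'\}=\lambda\{h\}+\lambda'\{h'\}$; (9) $[\{h\},\{h'\}]=qh\otimes qh'$; (10) $\{[h,g]\}=q(h\otimes g)$. For $q=0$, $\mathfrak h\otimes^0\mathfrak g$ is generated by the symbols $h\otimes g$ subject to (1)–(6) only (Ellis's non-abelian tensor product). The non-abelian $q$-exterior product $\mathfrak h\wedge^q\mathfrak g$ is the quotient of $\mathfrak h\otimes^q\mathfrak g$ by the relations $h\otimes h=0$, $h\in\mathfrak h$; images of generators are written $h\wedge g$ and $\{h\}$. *)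

theory Defs
  imports Main
begin

record ('r, 'a) lie_alg =
  lcarrier :: "'a set"
  lzero :: "'a"
  ladd :: "'a \<Rightarrow> 'a \<Rightarrow> 'a"
  lneg :: "'a \<Rightarrow> 'a"
  lsmul :: "'r \<Rightarrow> 'a \<Rightarrow> 'a"
  lbr :: "'a \<Rightarrow> 'a \<Rightarrow> 'a"

definition lie_algebra :: "('r::comm_ring_1, 'a) lie_alg \<Rightarrow> bool" where
  "lie_algebra L \<longleftrightarrow>
     (let C = lcarrier L; z = lzero L; ad = ladd L; ng = lneg L; sm = lsmul L; b = lbr L in
      z \<in> C \<and>
      (\<forall>x\<in>C. \<forall>y\<in>C. ad x y \<in> C) \<and> (\<forall>x\<in>C. ng x \<in> C) \<and>
      (\<forall>r. \<forall>x\<in>C. sm r x \<in> C) \<and> (\<forall>x\<in>C. \<forall>y\<in>C. b x y \<in> C) \<and>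
      (\<forall>x\<in>C. \<forall>y\<in>C. \<forall>w\<in>C. ad (ad x y) w = ad x (ad y w)) \<and>
      (\<forall>x\<in>C. \<forall>y\<in>C. ad x y = ad y x) \<and>
      (\<forall>x\<in>C. ad z x = x) \<and>
      (\<forall>x\<in>C. ad (ng x) x = z) \<and>
      (\<forall>r s. \<forall>x\<in>C. sm (r + s) x = ad (sm r x) (sm s x)) \<and>
      (\<forall>r. \<forall>x\<in>C. \<forall>y\<in>C. sm r (ad x y) = ad (sm r x) (sm r y)) \<and>
      (\<forall>r s. \<forall>x\<in>C. sm (r * s) x = sm r (sm s x)) \<and>
      (\<forall>x\<in>C. sm 1 x = x) \<and>
      (\<forall>x\<in>C. \<forall>y\<in>C. \<forall>w\<in>C. b (ad x y) w = ad (b x w) (b y w)) \<and>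
      (\<forall>x\<in>C. \<forall>y\<in>C. \<forall>w\<in>C. b x (ad y w) = ad (b x y) (b x w)) \<and>
      (\<forall>r. \<forall>x\<in>C. \<forall>y\<in>C. b (sm r x) y = sm r (b x y)) \<and>
      (\<forall>r. \<forall>x\<in>C. \<forall>y\<in>C. b x (sm r y) = sm r (b x y)) \<and>
      (\<forall>x\<in>C. b x x = z) \<and>
      (\<forall>x\<in>C. \<forall>y\<in>C. \<forall>w\<in>C. ad (ad (b x (b y w)) (b y (b w x))) (b w (b x y)) = z))"

definition lie_ideal :: "('r::comm_ring_1, 'a) lie_alg \<Rightarrow> 'a set \<Rightarrow> bool" where
  "lie_ideal L H \<longleftrightarrow> H \<subseteq> lcarrier L \<and> lzero L \<in> H \<and>
     (\<forall>x\<in>H. \<forall>y\<in>H. ladd L x y \<in> H) \<and> (\<forall>x\<in>H. lneg L x \<in> H) \<and>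
     (\<forall>r. \<forall>x\<in>H. lsmul L r x \<in> H) \<and>
     (\<forall>x\<in>H. \<forall>y\<in>lcarrier L. lbr L x y \<in> H)"

definition lie_hom :: "('r::comm_ring_1, 'a) lie_alg \<Rightarrow> ('r, 'b) lie_alg \<Rightarrow> ('a \<Rightarrow> 'b) \<Rightarrow> bool" where
  "lie_hom L M f \<longleftrightarrow> f ` lcarrier L \<subseteq> lcarrier M \<and>
     (\<forall>x\<in>lcarrier L. \<forall>y\<in>lcarrier L. f (ladd L x y) = ladd M (f x) (f y)) \<and>
     (\<forall>r. \<forall>x\<in>lcarrier L. f (lsmul L r x) = lsmul M r (f x)) \<and>
     (\<forall>x\<in>lcarrier L. \<forall>y\<in>lcarrier L. f (lbr L x y) = lbr M (f x) (f y))"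

text \<open>Formal Lie-algebra expressions in the generators h \<otimes> g (Tn h g) and
  {h} (Cu h).\<close>
datatype ('r, 'g) lterm =
    Tn 'g 'g | Cu 'g | LZero | LAdd "('r, 'g) lterm" "('r, 'g) lterm"
  | LNeg "('r, 'g) lterm" | LSmul 'r "('r, 'g) lterm" | LBr "('r, 'g) lterm" "('r, 'g) lterm"

fun wf_term :: "'g set \<Rightarrow> 'g set \<Rightarrow> nat \<Rightarrow> ('r, 'g) lterm \<Rightarrow> bool" where
  "wf_term H C q (Tn h g) = (h \<in> H \<and> g \<in> C)"
| "wf_term H C q (Cu h) = (h \<in> H \<and> 1 \<le> q)"
| "wf_term H C q LZero = True"
| "wf_term H C q (LAdd a b) = (wf_term H C q a \<and> wf_term H C q b)"
| "wf_term H C q (LNeg a) = wf_term H C q a"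
| "wf_term H C q (LSmul r a) = wf_term H C q a"
| "wf_term H C q (LBr a b) = (wf_term H C q a \<and> wf_term H C q b)"

abbreviation LSub where "LSub a b \<equiv> LAdd a (LNeg b)"

text \<open>The congruence generated by the Lie algebra axioms and relations (1)--(10)
  (relations (7)--(10) only when q >= 1); if ext is True, additionally
  h \<otimes> h = 0 (exterior product).\<close>
inductive teq :: "('r::comm_ring_1, 'g) lie_alg \<Rightarrow> 'g set \<Rightarrow> nat \<Rightarrow> bool
                  \<Rightarrow> ('r, 'g) lterm \<Rightarrow> ('r, 'g) lterm \<Rightarrow> bool"
  for G H q ext where
  refl: "wf_term H (lcarrier G) q a \<Longrightarrow> teq G H q ext a a"
| sym: "teq G H q ext a b \<Longrightarrow> teq G H q ext b a"
| trans: "teq G H q ext a b \<Longrightarrow> teq G H q ext b c \<Longrightarrow> teq G H q ext a c"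
| cong_add: "teq G H q ext a a' \<Longrightarrow> teq G H q ext b b' \<Longrightarrow> teq G H q ext (LAdd a b) (LAdd a' b')"
| cong_neg: "teq G H q ext a a' \<Longrightarrow> teq G H q ext (LNeg a) (LNeg a')"
| cong_smul: "teq G H q ext a a' \<Longrightarrow> teq G H q ext (LSmul r a) (LSmul r a')"
| cong_br: "teq G H q ext a a' \<Longrightarrow> teq G H q ext b b' \<Longrightarrow> teq G H q ext (LBr a b) (LBr a' b')"
| add_assoc: "wf_term H (lcarrier G) q a \<Longrightarrow> wf_term H (lcarrier G) q b \<Longrightarrow> wf_term H (lcarrier G) q c \<Longrightarrow>
     teq G H q ext (LAdd (LAdd a b) c) (LAdd a (LAdd b c))"
| add_comm: "wf_term H (lcarrier G) q a \<Longrightarrow> wf_term H (lcarrier G) q b \<Longrightarrow>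
     teq G H q ext (LAdd a b) (LAdd b a)"
| add_zero: "wf_term H (lcarrier G) q a \<Longrightarrow> teq G H q ext (LAdd LZero a) a"
| add_neg: "wf_term H (lcarrier G) q a \<Longrightarrow> teq G H q ext (LAdd (LNeg a) a) LZero"
| smul_add_scalar: "wf_term H (lcarrier G) q a \<Longrightarrow>
     teq G H q ext (LSmul (r + s) a) (LAdd (LSmul r a) (LSmul s a))"
| smul_add: "wf_term H (lcarrier G) q a \<Longrightarrow> wf_term H (lcarrier G) q b \<Longrightarrow>
     teq G H q ext (LSmul r (LAdd a b)) (LAdd (LSmul r a) (LSmul r b))"
| smul_mult: "wf_term H (lcarrier G) q a \<Longrightarrow> teq G H q ext (LSmul (r * s) a) (LSmul r (LSmul s a))"
| smul_one: "wf_term H (lcarrier G) q a \<Longrightarrow> teq G H q ext (LSmul 1 a) a"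
| br_add_left: "wf_term H (lcarrier G) q a \<Longrightarrow> wf_term H (lcarrier G) q b \<Longrightarrow> wf_term H (lcarrier G) q c \<Longrightarrow>
     teq G H q ext (LBr (LAdd a b) c) (LAdd (LBr a c) (LBr b c))"
| br_add_right: "wf_term H (lcarrier G) q a \<Longrightarrow> wf_term H (lcarrier G) q b \<Longrightarrow> wf_term H (lcarrier G) q c \<Longrightarrow>
     teq G H q ext (LBr a (LAdd b c)) (LAdd (LBr a b) (LBr a c))"
| br_smul_left: "wf_term H (lcarrier G) q a \<Longrightarrow> wf_term H (lcarrier G) q b \<Longrightarrow>
     teq G H q ext (LBr (LSmul r a) b) (LSmul r (LBr a b))"
| br_smul_right: "wf_term H (lcarrier G) q a \<Longrightarrow> wf_term H (lcarrier G) q b \<Longrightarrow>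
     teq G H q ext (LBr a (LSmul r b)) (LSmul r (LBr a b))"
| br_alt: "wf_term H (lcarrier G) q a \<Longrightarrow> teq G H q ext (LBr a a) LZero"
| jacobi: "wf_term H (lcarrier G) q a \<Longrightarrow> wf_term H (lcarrier G) q b \<Longrightarrow> wf_term H (lcarrier G) q c \<Longrightarrow>
     teq G H q ext (LAdd (LAdd (LBr a (LBr b c)) (LBr b (LBr c a))) (LBr c (LBr a b))) LZero"
| rel1a: "h \<in> H \<Longrightarrow> g \<in> lcarrier G \<Longrightarrow> teq G H q ext (LSmul r (Tn h g)) (Tn (lsmul G r h) g)"
| rel1b: "h \<in> H \<Longrightarrow> g \<in> lcarrier G \<Longrightarrow> teq G H q ext (LSmul r (Tn h g)) (Tn h (lsmul G r g))"
| rel2: "h \<in> H \<Longrightarrow> h' \<in> H \<Longrightarrow> g \<in> lcarrier G \<Longrightarrow>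
     teq G H q ext (Tn (ladd G h h') g) (LAdd (Tn h g) (Tn h' g))"
| rel3: "h \<in> H \<Longrightarrow> g \<in> lcarrier G \<Longrightarrow> g' \<in> lcarrier G \<Longrightarrow>
     teq G H q ext (Tn h (ladd G g g')) (LAdd (Tn h g) (Tn h g'))"
| rel4: "h \<in> H \<Longrightarrow> h' \<in> H \<Longrightarrow> g \<in> lcarrier G \<Longrightarrow>
     teq G H q ext (Tn (lbr G h h') g) (LSub (Tn h (lbr G h' g)) (Tn h' (lbr G h g)))"
| rel5: "h \<in> H \<Longrightarrow> g \<in> lcarrier G \<Longrightarrow> g' \<in> lcarrier G \<Longrightarrow>
     teq G H q ext (Tn h (lbr G g g')) (LSub (Tn (lbr G g' h) g) (Tn (lbr G g h) g'))"
| rel6: "h \<in> H \<Longrightarrow> h' \<in> H \<Longrightarrow> g \<in> lcarrier G \<Longrightarrow> g' \<in> lcarrier G \<Longrightarrow>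
     teq G H q ext (LBr (Tn h g) (Tn h' g')) (Tn (lbr G h g) (lbr G h' g'))"
| rel7: "1 \<le> q \<Longrightarrow> h \<in> H \<Longrightarrow> h' \<in> H \<Longrightarrow> g \<in> lcarrier G \<Longrightarrow>
     teq G H q ext (LBr (Cu h') (Tn h g))
       (LAdd (Tn (lbr G (lsmul G (of_nat q) h') h) g) (Tn h (lbr G (lsmul G (of_nat q) h') g)))"
| rel8: "1 \<le> q \<Longrightarrow> h \<in> H \<Longrightarrow> h' \<in> H \<Longrightarrow>
     teq G H q ext (Cu (ladd G (lsmul G r h) (lsmul G s h'))) (LAdd (LSmul r (Cu h)) (LSmul s (Cu h')))"
| rel9: "1 \<le> q \<Longrightarrow> h \<in> H \<Longrightarrow> h' \<in> H \<Longrightarrow>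
     teq G H q ext (LBr (Cu h) (Cu h')) (Tn (lsmul G (of_nat q) h) (lsmul G (of_nat q) h'))"
| rel10: "1 \<le> q \<Longrightarrow> h \<in> H \<Longrightarrow> g \<in> lcarrier G \<Longrightarrow>
     teq G H q ext (Cu (lbr G h g)) (LSmul (of_nat q) (Tn h g))"
| rel_ext: "ext \<Longrightarrow> h \<in> H \<Longrightarrow> teq G H q ext (Tn h h) LZero"

definition tcls :: "('r::comm_ring_1, 'g) lie_alg \<Rightarrow> 'g set \<Rightarrow> nat \<Rightarrow> bool
                    \<Rightarrow> ('r, 'g) lterm \<Rightarrow> ('r, 'g) lterm set" where
  "tcls G H q ext t = {s. teq G H q ext s t}"

definition trep :: "('r, 'g) lterm set \<Rightarrow> ('r, 'g) lterm" where
  "trep X = (SOME t. t \<in> X)"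

definition pres_alg :: "('r::comm_ring_1, 'g) lie_alg \<Rightarrow> 'g set \<Rightarrow> nat \<Rightarrow> bool
                        \<Rightarrow> ('r, ('r, 'g) lterm set) lie_alg" where
  "pres_alg G H q ext =
    \<lparr> lcarrier = {tcls G H q ext t | t. wf_term H (lcarrier G) q t},
      lzero = tcls G H q ext LZero,
      ladd = (\<lambda>X Y. tcls G H q ext (LAdd (trep X) (trep Y))),
      lneg = (\<lambda>X. tcls G H q ext (LNeg (trep X))),
      lsmul = (\<lambda>r X. tcls G H q ext (LSmul r (trep X))),
      lbr = (\<lambda>X Y. tcls G H q ext (LBr (trep X) (trep Y))) \<rparr>"

abbreviation q_tensor where "q_tensor G H q \<equiv> pres_alg G H q False"
abbreviation q_exterior where "q_exterior G H q \<equiv> pres_alg G H q True"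

definition tgen :: "('r::comm_ring_1, 'g) lie_alg \<Rightarrow> 'g set \<Rightarrow> nat \<Rightarrow> bool \<Rightarrow> 'g \<Rightarrow> 'g \<Rightarrow> ('r, 'g) lterm set" where
  "tgen G H q ext h g = tcls G H q ext (Tn h g)"

definition tcurly :: "('r::comm_ring_1, 'g) lie_alg \<Rightarrow> 'g set \<Rightarrow> nat \<Rightarrow> bool \<Rightarrow> 'g \<Rightarrow> ('r, 'g) lterm set" where
  "tcurly G H q ext h = tcls G H q ext (Cu h)"

definition tproj :: "('r::comm_ring_1, 'g) lie_alg \<Rightarrow> 'g set \<Rightarrow> nat \<Rightarrow> ('r, 'g) lterm set \<Rightarrow> ('r, 'g) lterm set" where
  "tproj G H q X = tcls G H q True (trep X)"

end

theory Submission
  imports Defs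
begin

text \<open>
  The map \<xi> evaluates formal expressions in the Lie algebra: h \<otimes> g goes to [h, g] and {h}
  to q h. Every defining relation, including h \<otimes> h = 0, holds after evaluation (relations
  (4), (5) and (7) are forms of the Jacobi identity), so \<xi> is well defined on the q-tensor and
  on the q-exterior product, takes values in the ideal, and factors through the projection.

  For {\<xi> x} = q x: the presented algebra is itself a Lie algebra, and both sides are linear in x.
  They agree on generators by relations (10) and (8). By relations (6), (7) and (9) the bracket of
  two generators is a linear combination of generators, so the generators span the presented
  algebra as a module and the two sides agree everywhere.
\<close>

locale lie_algebra_context =
  fixes L :: "('r::comm_ring_1, 'a) lie_alg"
  assumes lie_algebra: "lie_algebra L"
begin

abbreviation "C \<equiv> lcarrier L"
abbreviation "zero \<equiv> lzero L"
abbreviation "add \<equiv> ladd L"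
abbreviation "neg \<equiv> lneg L"
abbreviation "smul \<equiv> lsmul L"
abbreviation "br \<equiv> lbr L"

lemma lzero_closed [simp]: "zero \<in> C"
  using lie_algebra unfolding lie_algebra_def Let_def by metis

lemma ladd_closed [simp]: "x \<in> C \<Longrightarrow> y \<in> C \<Longrightarrow> add x y \<in> C"
  using lie_algebra unfolding lie_algebra_def Let_def by metis

lemma lneg_closed [simp]: "x \<in> C \<Longrightarrow> neg x \<in> C"
  using lie_algebra unfolding lie_algebra_def Let_def by metis

lemma lsmul_closed [simp]: "x \<in> C \<Longrightarrow> smul r x \<in> C"
  using lie_algebra unfolding lie_algebra_def Let_def by metis

lemma lbr_closed [simp]: "x \<in> C \<Longrightarrow> y \<in> C \<Longrightarrow> br x y \<in> C"
  using lie_algebra unfolding lie_algebra_def Let_def by metis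

lemma ladd_assoc: "x \<in> C \<Longrightarrow> y \<in> C \<Longrightarrow> w \<in> C \<Longrightarrow> add (add x y) w = add x (add y w)"
  using lie_algebra unfolding lie_algebra_def Let_def by metis

lemma ladd_comm: "x \<in> C \<Longrightarrow> y \<in> C \<Longrightarrow> add x y = add y x"
  using lie_algebra unfolding lie_algebra_def Let_def by metis

lemma ladd_zero_left [simp]: "x \<in> C \<Longrightarrow> add zero x = x"
  using lie_algebra unfolding lie_algebra_def Let_def by metis

lemma ladd_neg_left [simp]: "x \<in> C \<Longrightarrow> add (neg x) x = zero"
  using lie_algebra unfolding lie_algebra_def Let_def by metis

lemma lsmul_add_scalar: "x \<in> C \<Longrightarrow> smul (r + s) x = add (smul r x) (smul s x)"
  using lie_algebra unfolding lie_algebra_def Let_def by metis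

lemma lsmul_add: "x \<in> C \<Longrightarrow> y \<in> C \<Longrightarrow> smul r (add x y) = add (smul r x) (smul r y)"
  using lie_algebra unfolding lie_algebra_def Let_def by metis

lemma lsmul_mult: "x \<in> C \<Longrightarrow> smul (r * s) x = smul r (smul s x)"
  using lie_algebra unfolding lie_algebra_def Let_def by metis

lemma lsmul_one [simp]: "x \<in> C \<Longrightarrow> smul 1 x = x"
  using lie_algebra unfolding lie_algebra_def Let_def by metis

lemma lbr_add_left: "x \<in> C \<Longrightarrow> y \<in> C \<Longrightarrow> w \<in> C \<Longrightarrow> br (add x y) w = add (br x w) (br y w)"
  using lie_algebra unfolding lie_algebra_def Let_def by metis

lemma lbr_add_right: "x \<in> C \<Longrightarrow> y \<in> C \<Longrightarrow> w \<in> C \<Longrightarrow> br x (add y w) = add (br x y) (br x w)"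
  using lie_algebra unfolding lie_algebra_def Let_def by metis

lemma lbr_smul_left: "x \<in> C \<Longrightarrow> y \<in> C \<Longrightarrow> br (smul r x) y = smul r (br x y)"
  using lie_algebra unfolding lie_algebra_def Let_def by metis

lemma lbr_smul_right: "x \<in> C \<Longrightarrow> y \<in> C \<Longrightarrow> br x (smul r y) = smul r (br x y)"
  using lie_algebra unfolding lie_algebra_def Let_def by metis

lemma lbr_self [simp]: "x \<in> C \<Longrightarrow> br x x = zero"
  using lie_algebra unfolding lie_algebra_def Let_def by metis

lemma lbr_jacobi:
  "x \<in> C \<Longrightarrow> y \<in> C \<Longrightarrow> w \<in> C \<Longrightarrow>
    add (add (br x (br y w)) (br y (br w x))) (br w (br x y)) = zero"
  using lie_algebra unfolding lie_algebra_def Let_def by metis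

lemma ladd_zero_right [simp]: "x \<in> C \<Longrightarrow> add x zero = x"
  using ladd_comm[of x zero] by simp

lemma ladd_neg_right [simp]: "x \<in> C \<Longrightarrow> add x (neg x) = zero"
  using ladd_comm[of x "neg x"] by simp

lemma ladd_left_commute: "x \<in> C \<Longrightarrow> y \<in> C \<Longrightarrow> w \<in> C \<Longrightarrow> add x (add y w) = add y (add x w)"
  by (metis ladd_assoc ladd_comm)

lemmas ladd_ac = ladd_assoc ladd_comm ladd_left_commute

lemma ladd_right_cancel:
  assumes "x \<in> C" "y \<in> C" "w \<in> C" and "add x w = add y w"
  shows "x = y"
proof -
  have "x = add (add x w) (neg w)" using assms(1,3) by (simp add: ladd_assoc)
  also have "\<dots> = add (add y w) (neg w)" using assms(4) by simp
  also have "\<dots> = y" using assms(2,3) by (simp add: ladd_assoc)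
  finally show ?thesis .
qed

lemma lneg_unique:
  assumes "x \<in> C" "y \<in> C" and "add x y = zero"
  shows "y = neg x"
  using ladd_right_cancel[of y "neg x" x] assms by (simp add: ladd_comm)

lemma lsmul_zero_scalar [simp]: "x \<in> C \<Longrightarrow> smul 0 x = zero"
  using ladd_right_cancel[of "smul 0 x" zero "smul 0 x"] lsmul_add_scalar[of x 0 0] by simp

lemma lneg_eq_lsmul_minus_one: "x \<in> C \<Longrightarrow> neg x = smul (-1) x"
  using lneg_unique[of x "smul (-1) x"] lsmul_add_scalar[of x 1 "-1"] by simp

lemma lsmul_zero [simp]: "smul r zero = zero"
  using lsmul_mult[of zero r 0] by simp

lemma lbr_zero_left [simp]: "x \<in> C \<Longrightarrow> br zero x = zero"
  using lbr_smul_left[of zero x 0] by simp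

lemma lbr_zero_right [simp]: "x \<in> C \<Longrightarrow> br x zero = zero"
  using lbr_smul_right[of x zero 0] by simp

lemma lneg_lneg [simp]: "x \<in> C \<Longrightarrow> neg (neg x) = x"
  using lneg_unique[of "neg x" x] by simp

lemma lneg_ladd: "x \<in> C \<Longrightarrow> y \<in> C \<Longrightarrow> neg (add x y) = add (neg x) (neg y)"
  by (simp add: lneg_eq_lsmul_minus_one lsmul_add)

lemma lbr_neg_left: "x \<in> C \<Longrightarrow> y \<in> C \<Longrightarrow> br (neg x) y = neg (br x y)"
  by (simp add: lneg_eq_lsmul_minus_one lbr_smul_left)

lemma lbr_neg_right: "x \<in> C \<Longrightarrow> y \<in> C \<Longrightarrow> br x (neg y) = neg (br x y)"
  by (simp add: lneg_eq_lsmul_minus_one lbr_smul_right)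

lemma lbr_anticomm:
  assumes "x \<in> C" "y \<in> C"
  shows "br x y = neg (br y x)"
proof -
  have "zero = br (add x y) (add x y)" using assms by simp
  also have "\<dots> = add (add (br x x) (br y x)) (add (br x y) (br y y))"
    using assms by (simp only: lbr_add_left lbr_add_right ladd_closed)
  also have "\<dots> = add (br y x) (br x y)" using assms by simp
  finally show ?thesis using assms by (intro lneg_unique) auto
qed


lemma lbr_leibniz:
  assumes "x \<in> C" "h \<in> C" "g \<in> C"
  shows "br x (br h g) = add (br (br x h) g) (br h (br x g))"
proof -
  let ?A = "br x (br h g)" and ?B = "br h (br g x)" and ?D = "br g (br x h)"
  have "add (add ?B ?D) ?A = zero" using assms lbr_jacobi[of x h g] by (simp add: ladd_ac)
  then have "?A = neg (add ?B ?D)" using assms by (intro lneg_unique) auto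
  also have "\<dots> = add (neg ?D) (neg ?B)" using assms by (simp add: lneg_ladd ladd_comm)
  also have "neg ?D = br (br x h) g" using assms lbr_anticomm[of "br x h" g] by simp
  also have "neg ?B = br h (br x g)" using assms lbr_anticomm[of g x] by (simp add: lbr_neg_right)
  finally show ?thesis .
qed

lemma lbr_lbr_left:
  assumes "x \<in> C" "y \<in> C" "w \<in> C"
  shows "br (br x y) w = add (br x (br y w)) (neg (br y (br x w)))"
  using assms lbr_leibniz[of x y w] by (simp add: ladd_assoc)

lemma lbr_lbr_right:
  assumes "x \<in> C" "y \<in> C" "w \<in> C"
  shows "br x (br y w) = add (br (br w x) y) (neg (br (br y x) w))"
proof -
  have "br x (br y w) = add (br (br x y) w) (br y (br x w))" using assms by (rule lbr_leibniz)
  also have "br (br x y) w = neg (br (br y x) w)"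
    using assms lbr_anticomm[of x y] by (simp add: lbr_neg_left)
  also have "br y (br x w) = br (br w x) y"
    using assms lbr_anticomm[of y "br x w"] lbr_anticomm[of x w] by (simp add: lbr_neg_left)
  finally show ?thesis using assms by (simp add: ladd_comm)
qed

end

definition module_hom :: "('r::comm_ring_1, 'a) lie_alg \<Rightarrow> ('r, 'b) lie_alg \<Rightarrow> ('a \<Rightarrow> 'b) \<Rightarrow> bool" where
  "module_hom L M f \<longleftrightarrow> f ` lcarrier L \<subseteq> lcarrier M \<and>
     (\<forall>x\<in>lcarrier L. \<forall>y\<in>lcarrier L. f (ladd L x y) = ladd M (f x) (f y)) \<and>
     (\<forall>r. \<forall>x\<in>lcarrier L. f (lsmul L r x) = lsmul M r (f x))"

inductive_set lin_span :: "('r::comm_ring_1, 'a) lie_alg \<Rightarrow> 'a set \<Rightarrow> 'a set"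
  for L S where
  gen: "x \<in> S \<Longrightarrow> x \<in> lin_span L S"
| zero: "lzero L \<in> lin_span L S"
| add: "x \<in> lin_span L S \<Longrightarrow> y \<in> lin_span L S \<Longrightarrow> ladd L x y \<in> lin_span L S"
| neg: "x \<in> lin_span L S \<Longrightarrow> lneg L x \<in> lin_span L S"
| smul: "x \<in> lin_span L S \<Longrightarrow> lsmul L r x \<in> lin_span L S"

context lie_algebra_context
begin

lemma lin_span_subset: "S \<subseteq> C \<Longrightarrow> lin_span L S \<subseteq> C"
proof
  fix x assume "x \<in> lin_span L S" "S \<subseteq> C"
  then show "x \<in> C" by (induction rule: lin_span.induct) auto
qed

lemma lin_span_br_closed:
  assumes S: "S \<subseteq> C" and br_S: "\<And>x y. x \<in> S \<Longrightarrow> y \<in> S \<Longrightarrow> br x y \<in> lin_span L S"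
    and x: "x \<in> lin_span L S" and y: "y \<in> lin_span L S"
  shows "br x y \<in> lin_span L S"
proof -
  have S_C: "u \<in> C" if "u \<in> S" for u using that S by blast
  have span_C: "u \<in> C" if "u \<in> lin_span L S" for u using that lin_span_subset[OF S] by blast
  have br_gen: "br s u \<in> lin_span L S" if s: "s \<in> S" and "u \<in> lin_span L S" for s u
    using \<open>u \<in> lin_span L S\<close>
  proof (induction rule: lin_span.induct)
    case (gen u) with s show ?case by (rule br_S)
  next
    case zero then show ?case using s by (auto simp: S_C intro: lin_span.zero)
  next
    case (add u u')
    then show ?case using s by (auto simp: S_C span_C lbr_add_right intro: lin_span.add)
  next
    case (neg u)
    then show ?case using s by (auto simp: S_C span_C lbr_neg_right intro: lin_span.neg)
  next
    case (smul u r)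
    then show ?case using s by (auto simp: S_C span_C lbr_smul_right intro: lin_span.smul)
  qed
  from x show ?thesis
  proof (induction rule: lin_span.induct)
    case (gen x) then show ?case using y by (rule br_gen)
  next
    case zero then show ?case using y by (auto simp: span_C intro: lin_span.zero)
  next
    case (add x x')
    then show ?case using y by (auto simp: span_C lbr_add_left intro: lin_span.add)
  next
    case (neg x)
    then show ?case using y by (auto simp: span_C lbr_neg_left intro: lin_span.neg)
  next
    case (smul x r)
    then show ?case using y by (auto simp: span_C lbr_smul_left intro: lin_span.smul)
  qed
qed

lemma module_hom_zero:
  assumes "lie_algebra M" "module_hom L M f"
  shows "f zero = lzero M"
proof -
  interpret M: lie_algebra_context M using assms(1) by (rule lie_algebra_context.intro)
  have "f zero = f (smul 0 zero)" by simp
  also have "\<dots> = lsmul M 0 (f zero)"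
    using assms(2) unfolding module_hom_def by (simp del: lsmul_zero lsmul_zero_scalar)
  also have "\<dots> = lzero M"
    using assms(2) M.lsmul_zero_scalar lzero_closed unfolding module_hom_def by blast
  finally show ?thesis .
qed

lemma module_hom_neg:
  assumes "lie_algebra M" "module_hom L M f" "x \<in> C"
  shows "f (neg x) = lneg M (f x)"
proof -
  interpret M: lie_algebra_context M using assms(1) by (rule lie_algebra_context.intro)
  have "f x \<in> lcarrier M" using assms(2,3) unfolding module_hom_def by auto
  then show ?thesis
    using assms(2,3) unfolding module_hom_def
    by (simp add: lneg_eq_lsmul_minus_one M.lneg_eq_lsmul_minus_one)
qed

lemma module_hom_eq_on_lin_span:
  assumes M: "lie_algebra M" and f: "module_hom L M f" and g: "module_hom L M g"
    and S: "S \<subseteq> C" and eq: "\<And>x. x \<in> S \<Longrightarrow> f x = g x" and x: "x \<in> lin_span L S"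
  shows "f x = g x"
  using x
proof (induction rule: lin_span.induct)
  case (gen x) then show ?case by (rule eq)
next
  case zero then show ?case using M f g by (simp add: module_hom_zero)
next
  case (add x y)
  then show ?case using f g lin_span_subset[OF S] unfolding module_hom_def by (metis subsetD)
next
  case (neg x)
  then show ?case using M f g lin_span_subset[OF S] by (metis module_hom_neg subsetD)
next
  case (smul x r)
  then show ?case using f g lin_span_subset[OF S] unfolding module_hom_def by (metis subsetD)
qed

lemma module_hom_lsmul: "module_hom L L (smul c)"
  unfolding module_hom_def by (auto simp: lsmul_add mult.commute simp flip: lsmul_mult)

end

fun term_eval :: "('r::comm_ring_1, 'g) lie_alg \<Rightarrow> nat \<Rightarrow> ('r, 'g) lterm \<Rightarrow> 'g" where
  "term_eval L q (Tn h g) = lbr L h g"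
| "term_eval L q (Cu h) = lsmul L (of_nat q) h"
| "term_eval L q LZero = lzero L"
| "term_eval L q (LAdd a b) = ladd L (term_eval L q a) (term_eval L q b)"
| "term_eval L q (LNeg a) = lneg L (term_eval L q a)"
| "term_eval L q (LSmul r a) = lsmul L r (term_eval L q a)"
| "term_eval L q (LBr a b) = lbr L (term_eval L q a) (term_eval L q b)"

locale q_presentation = lie_algebra_context L for L :: "('r::comm_ring_1, 'a) lie_alg" +
  fixes H :: "'a set" and q :: nat and ext :: bool
  assumes ideal: "lie_ideal L H"
begin

abbreviation wft :: "('r, 'a) lterm \<Rightarrow> bool" where "wft t \<equiv> wf_term H C q t"
abbreviation teq_rel (infix "\<approx>" 50) where "a \<approx> b \<equiv> teq L H q ext a b"
abbreviation eval :: "('r, 'a) lterm \<Rightarrow> 'a" where "eval t \<equiv> term_eval L q t"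
abbreviation P where "P \<equiv> pres_alg L H q ext"
abbreviation cls :: "('r, 'a) lterm \<Rightarrow> ('r, 'a) lterm set" where "cls t \<equiv> tcls L H q ext t"

lemma ideal_subset [simp]: "x \<in> H \<Longrightarrow> x \<in> C"
  using ideal unfolding lie_ideal_def by blast

lemma ideal_closed [simp]:
  "zero \<in> H"
  "x \<in> H \<Longrightarrow> y \<in> H \<Longrightarrow> add x y \<in> H"
  "x \<in> H \<Longrightarrow> neg x \<in> H"
  "x \<in> H \<Longrightarrow> smul r x \<in> H"
  "x \<in> H \<Longrightarrow> y \<in> C \<Longrightarrow> br x y \<in> H"
  using ideal unfolding lie_ideal_def by blast+

lemma ideal_br_right [simp]: "x \<in> C \<Longrightarrow> y \<in> H \<Longrightarrow> br x y \<in> H"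
  using lbr_anticomm[of x y] by simp

lemma term_eval_in_ideal: "wft t \<Longrightarrow> eval t \<in> H"
  by (induction t) auto

lemma term_eval_closed [simp]: "wft t \<Longrightarrow> eval t \<in> C"
  using term_eval_in_ideal ideal_subset by blast

lemma teq_wf: "a \<approx> b \<Longrightarrow> wft a \<and> wft b"
  by (induction rule: teq.induct) auto

lemma term_eval_teq: "a \<approx> b \<Longrightarrow> eval a = eval b"
proof (induction rule: teq.induct)
  case (add_assoc a b c) then show ?case by (simp add: ladd_assoc)
next
  case (add_comm a b) then show ?case by (simp add: ladd_comm)
next
  case (smul_add_scalar a r s) then show ?case by (simp add: lsmul_add_scalar)
next
  case (smul_add a b r) then show ?case by (simp add: lsmul_add)
next
  case (smul_mult a r s) then show ?case by (simp add: lsmul_mult)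
next
  case (br_add_left a b c) then show ?case by (simp add: lbr_add_left)
next
  case (br_add_right a b c) then show ?case by (simp add: lbr_add_right)
next
  case (br_smul_left a b r) then show ?case by (simp add: lbr_smul_left)
next
  case (br_smul_right a b r) then show ?case by (simp add: lbr_smul_right)
next
  case (jacobi a b c) then show ?case by (simp add: lbr_jacobi)
next
  case (rel1a h g r) then show ?case by (simp add: lbr_smul_left)
next
  case (rel1b h g r) then show ?case by (simp add: lbr_smul_right)
next
  case (rel2 h h' g) then show ?case by (simp add: lbr_add_left)
next
  case (rel3 h g g') then show ?case by (simp add: lbr_add_right)
next
  case (rel4 h h' g) then show ?case using lbr_lbr_left[of h h' g] by simp
next
  case (rel5 h g g') then show ?case using lbr_lbr_right[of h g g'] by simp
next
  case (rel7 h h' g) then show ?case using lbr_leibniz[of "smul (of_nat q) h'" h g] by simp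
next
  case (rel8 h h' r s)
  then show ?case by (simp add: lsmul_add flip: lsmul_mult) (simp add: mult.commute)
qed auto

lemma trep_cls_teq: "wft t \<Longrightarrow> trep (cls t) \<approx> t"
  using someI[of "\<lambda>s. s \<in> cls t" t] by (simp add: trep_def tcls_def teq.refl)

lemma cls_eqI: "a \<approx> b \<Longrightarrow> cls a = cls b"
  unfolding tcls_def by (blast intro: teq.trans teq.sym)

lemma cls_in_carrier [simp]: "wft t \<Longrightarrow> cls t \<in> lcarrier P"
  by (auto simp: pres_alg_def)

lemma ball_pres_carrier: "(\<forall>X\<in>lcarrier P. \<Phi> X) \<longleftrightarrow> (\<forall>t. wft t \<longrightarrow> \<Phi> (cls t))"
  by (auto simp: pres_alg_def)

lemma pres_carrierE:
  assumes "X \<in> lcarrier P"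
  obtains t where "wft t" "X = cls t"
  using assms by (auto simp: pres_alg_def)

lemma wf_trep: "X \<in> lcarrier P \<Longrightarrow> wft (trep X)"
  by (metis pres_carrierE teq_wf trep_cls_teq)

lemma pres_zero: "lzero P = cls LZero"
  by (simp add: pres_alg_def)

lemma pres_add: "wft a \<Longrightarrow> wft b \<Longrightarrow> ladd P (cls a) (cls b) = cls (LAdd a b)"
  by (simp add: pres_alg_def cls_eqI teq.cong_add trep_cls_teq)

lemma pres_neg: "wft a \<Longrightarrow> lneg P (cls a) = cls (LNeg a)"
  by (simp add: pres_alg_def cls_eqI teq.cong_neg trep_cls_teq)

lemma pres_smul: "wft a \<Longrightarrow> lsmul P r (cls a) = cls (LSmul r a)"
  by (simp add: pres_alg_def cls_eqI teq.cong_smul trep_cls_teq)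

lemma pres_br: "wft a \<Longrightarrow> wft b \<Longrightarrow> lbr P (cls a) (cls b) = cls (LBr a b)"
  by (simp add: pres_alg_def cls_eqI teq.cong_br trep_cls_teq)

lemmas pres_ops = pres_zero pres_add pres_neg pres_smul pres_br

lemma lie_algebra_pres_alg: "lie_algebra P"
  unfolding lie_algebra_def Let_def ball_pres_carrier
  by (simp add: pres_ops cls_eqI teq.add_assoc teq.add_comm teq.add_zero teq.add_neg
      teq.smul_add_scalar teq.smul_add teq.smul_mult teq.smul_one teq.br_add_left
      teq.br_add_right teq.br_smul_left teq.br_smul_right teq.br_alt teq.jacobi)

interpretation pres: lie_algebra_context P
  by (rule lie_algebra_context.intro) (rule lie_algebra_pres_alg)

abbreviation \<xi> :: "('r, 'a) lterm set \<Rightarrow> 'a" where "\<xi> X \<equiv> eval (trep X)"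

lemma \<xi>_cls: "wft t \<Longrightarrow> \<xi> (cls t) = eval t"
  by (metis term_eval_teq trep_cls_teq)

lemma \<xi>_in_ideal: "X \<in> lcarrier P \<Longrightarrow> \<xi> X \<in> H"
  by (simp add: wf_trep term_eval_in_ideal)

lemma lie_hom_\<xi>: "lie_hom P L \<xi>"
  unfolding lie_hom_def ball_pres_carrier using \<xi>_in_ideal by (auto simp: pres_ops \<xi>_cls)

definition generators :: "('r, 'a) lterm set set" where
  "generators = {cls (Tn h g) | h g. h \<in> H \<and> g \<in> C} \<union> {cls (Cu h) | h. h \<in> H \<and> 1 \<le> q}"

lemma generatorsE:
  assumes "X \<in> generators"
  obtains (Tn) h g where "h \<in> H" "g \<in> C" "X = cls (Tn h g)"
    | (Cu) h where "1 \<le> q" "h \<in> H" "X = cls (Cu h)"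
  using assms unfolding generators_def by blast

lemma generators_subset: "generators \<subseteq> lcarrier P"
  unfolding generators_def by auto

lemma lbr_generators_in_lin_span:
  assumes "X \<in> generators" "Y \<in> generators"
  shows "lbr P X Y \<in> lin_span P generators"
proof -
  have Tn_gen: "cls (Tn h g) \<in> lin_span P generators" if "h \<in> H" "g \<in> C" for h g
    using that by (auto simp: generators_def intro: lin_span.gen)
  have Cu_Tn: "lbr P (cls (Cu h')) (cls (Tn h g)) \<in> lin_span P generators"
    if "1 \<le> q" "h' \<in> H" "h \<in> H" "g \<in> C" for h' h g
  proof -
    let ?x = "smul (of_nat q) h'"
    have "lbr P (cls (Cu h')) (cls (Tn h g)) = cls (LAdd (Tn (br ?x h) g) (Tn h (br ?x g)))"
      using that by (simp add: pres_br cls_eqI teq.rel7)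
    also have "\<dots> = ladd P (cls (Tn (br ?x h) g)) (cls (Tn h (br ?x g)))"
      using that by (simp add: pres_add)
    finally show ?thesis using that by (simp add: lin_span.add Tn_gen)
  qed
  from assms(1) show ?thesis
  proof (cases rule: generatorsE)
    case (Tn h g)
    from assms(2) show ?thesis
    proof (cases rule: generatorsE)
      case (Tn h' g')
      then have "lbr P X Y = cls (Tn (br h g) (br h' g'))"
        using \<open>h \<in> H\<close> \<open>g \<in> C\<close> \<open>X = cls (Tn h g)\<close> by (simp add: pres_br cls_eqI teq.rel6)
      then show ?thesis using Tn \<open>h \<in> H\<close> \<open>g \<in> C\<close> by (simp add: Tn_gen)
    next
      case (Cu h')
      then show ?thesis
        using Tn pres.lbr_anticomm[of X Y] Cu_Tn[of h' h g] by (auto intro: lin_span.neg)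
    qed
  next
    case (Cu h)
    from assms(2) show ?thesis
    proof (cases rule: generatorsE)
      case (Tn h' g')
      then show ?thesis using Cu Cu_Tn by simp
    next
      case (Cu h')
      then have "lbr P X Y = cls (Tn (smul (of_nat q) h) (smul (of_nat q) h'))"
        using \<open>h \<in> H\<close> \<open>X = cls (Cu h)\<close> by (simp add: pres_br cls_eqI teq.rel9)
      then show ?thesis using Cu \<open>h \<in> H\<close> by (simp add: Tn_gen)
    qed
  qed
qed

lemma lin_span_generators: "lin_span P generators = lcarrier P"
proof
  show "lin_span P generators \<subseteq> lcarrier P"
    by (rule pres.lin_span_subset[OF generators_subset])
  have "cls t \<in> lin_span P generators" if "wft t" for t
    using that
  proof (induction t)
    case (Tn h g) then show ?case by (auto simp: generators_def intro: lin_span.gen)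
  next
    case (Cu h) then show ?case by (auto simp: generators_def intro: lin_span.gen)
  next
    case LZero then show ?case using lin_span.zero[of P generators] by (simp add: pres_zero)
  next
    case (LAdd a b)
    then show ?case using lin_span.add[of "cls a" P generators "cls b"] by (simp add: pres_add)
  next
    case (LNeg a)
    then show ?case using lin_span.neg[of "cls a" P generators] by (simp add: pres_neg)
  next
    case (LSmul r a)
    then show ?case using lin_span.smul[of "cls a" P generators r] by (simp add: pres_smul)
  next
    case (LBr a b)
    then show ?case
      using pres.lin_span_br_closed[OF generators_subset lbr_generators_in_lin_span,
          of "cls a" "cls b"]
      by (simp add: pres_br)
  qed
  then show "lcarrier P \<subseteq> lin_span P generators"
    by (auto elim: pres_carrierE)
qed

lemma cls_Cu_lin_comb:
  assumes "1 \<le> q" "h \<in> H" "h' \<in> H"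
  shows "cls (Cu (add (smul r h) (smul s h'))) =
    ladd P (lsmul P r (cls (Cu h))) (lsmul P s (cls (Cu h')))"
  using assms by (simp add: pres_add pres_smul cls_eqI teq.rel8)

lemma module_hom_cls_Cu_\<xi>:
  assumes "1 \<le> q"
  shows "module_hom P P (\<lambda>X. cls (Cu (\<xi> X)))"
  unfolding module_hom_def
proof (intro conjI ballI allI subsetI)
  fix X assume "X \<in> (\<lambda>X. cls (Cu (\<xi> X))) ` lcarrier P"
  then show "X \<in> lcarrier P" using assms \<xi>_in_ideal by auto
next
  fix X Y assume "X \<in> lcarrier P" "Y \<in> lcarrier P"
  then show "cls (Cu (\<xi> (ladd P X Y))) = ladd P (cls (Cu (\<xi> X))) (cls (Cu (\<xi> Y)))"
    using assms cls_Cu_lin_comb[of "\<xi> X" "\<xi> Y" 1 1] lie_hom_\<xi> \<xi>_in_ideal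
    by (simp add: lie_hom_def)
next
  fix r X assume "X \<in> lcarrier P"
  then show "cls (Cu (\<xi> (lsmul P r X))) = lsmul P r (cls (Cu (\<xi> X)))"
    using assms cls_Cu_lin_comb[of "\<xi> X" "\<xi> X" r 0] lie_hom_\<xi> \<xi>_in_ideal
    by (simp add: lie_hom_def)
qed

lemma cls_Cu_\<xi>:
  assumes "1 \<le> q" "X \<in> lcarrier P"
  shows "cls (Cu (\<xi> X)) = lsmul P (of_nat q) X"
proof -
  have "cls (Cu (\<xi> Y)) = lsmul P (of_nat q) Y" if "Y \<in> generators" for Y
    using that
  proof (cases rule: generatorsE)
    case (Tn h g)
    then show ?thesis using assms(1) by (simp add: \<xi>_cls pres_smul cls_eqI teq.rel10)
  next
    case (Cu h)
    then show ?thesis using cls_Cu_lin_comb[of h h "of_nat q" 0] by (simp add: \<xi>_cls)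
  qed
  then show ?thesis
    using pres.module_hom_eq_on_lin_span[OF lie_algebra_pres_alg
        module_hom_cls_Cu_\<xi>[OF assms(1)] pres.module_hom_lsmul generators_subset]
      assms(2) lin_span_generators by blast
qed

end

theorem lemma2p4:
  fixes G :: "('r::comm_ring_1, 'g) lie_alg" and H :: "'g set" and q :: nat
  assumes "lie_algebra G" and "lie_ideal G H"
  shows "\<exists>\<xi>t \<xi>w.
     lie_hom (q_tensor G H q) G \<xi>t \<and>
     (\<forall>h\<in>H. \<forall>g\<in>lcarrier G. \<xi>t (tgen G H q False h g) = lbr G h g) \<and>
     (1 \<le> q \<longrightarrow> (\<forall>h\<in>H. \<xi>t (tcurly G H q False h) = lsmul G (of_nat q) h)) \<and>
     lie_hom (q_exterior G H q) G \<xi>w \<and>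
     (\<forall>x\<in>lcarrier (q_tensor G H q). \<xi>w (tproj G H q x) = \<xi>t x) \<and>
     (1 \<le> q \<longrightarrow>
        \<xi>t ` lcarrier (q_tensor G H q) \<subseteq> H \<and>
        \<xi>w ` lcarrier (q_exterior G H q) \<subseteq> H \<and>
        (\<forall>x\<in>lcarrier (q_tensor G H q).
            tcurly G H q False (\<xi>t x) = lsmul (q_tensor G H q) (of_nat q) x) \<and>
        (\<forall>x\<in>lcarrier (q_exterior G H q).
            tcurly G H q True (\<xi>w x) = lsmul (q_exterior G H q) (of_nat q) x))"
proof -
  interpret T: q_presentation G H q False
    using assms
    by (intro q_presentation.intro lie_algebra_context.intro q_presentation_axioms.intro)
  interpret E: q_presentation G H q True
    using assms
    by (intro q_presentation.intro lie_algebra_context.intro q_presentation_axioms.intro)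
  let ?\<xi> = "\<lambda>X. term_eval G q (trep X)"
  show ?thesis
  proof (intro exI[of _ ?\<xi>] conjI impI ballI subsetI)
    show "lie_hom (q_tensor G H q) G ?\<xi>" by (rule T.lie_hom_\<xi>)
    show "lie_hom (q_exterior G H q) G ?\<xi>" by (rule E.lie_hom_\<xi>)
  qed (auto simp: tgen_def tcurly_def tproj_def T.\<xi>_cls E.\<xi>_cls T.wf_trep
      T.\<xi>_in_ideal E.\<xi>_in_ideal T.cls_Cu_\<xi> E.cls_Cu_\<xi>)
qed

end
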